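(* In the binary setting, for any prior $\pi\in(0,1)$ and qualities $\tfrac12\le q_2<q_1\le1$, $$U_\pi(q_1)-U_\pi(q_2)\le\bar f(v_H-v_L)^2\Big[\tfrac23(q_1^3-q_2^3)-\tfrac12(q_1^2-q_2^2)\Big],\qquad \bar f=\sup_{p\in[v_L,v_H]}f(p).$$ Consequently, if a signal of quality $q_1$ costs more than this amount above the cost of a signal of quality $q_2$, the advertiser prefers (buying only) the signal of quality $q_2$ regardless of her prior.
   Context: Binary setting: a single advertiser bids in a second-price auction; the user is of type $H$ with prior $\pi$ and $L$ otherwise, values $v_H>v_L\ge0$; the highest competing bid is independent of type with density $f$ and cdf $F$. $U_\pi(q)$ denotes the advertiser's value (expected utility with the signal minus without) for a signal $s\in\{h,\ell\}$ of quality $q$, i.e. $\Pr[s=h\mid H]=\Pr[s=\ell\mid L]=q$; without data she bids $\pi v_H+(1-\pi)v_L$ and with the signal she bids her posterior expected value. *)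

theory Defs
  imports "HOL-Analysis.Analysis"
begin

text \<open>The highest competing bid has density f (on the reals,
  supported on the nonnegative reals). Expected utility of an advertiser whose
  (expected) value is v and who bids b in a second-price auction: she wins
  iff the competing bid p is below b and then pays p.\<close>

definition payoff :: "(real \<Rightarrow> real) \<Rightarrow> real \<Rightarrow> real \<Rightarrow> real" where
  "payoff f v b = (LINT p:{..<b}|lborel. (v - p) * f p)"

definition prob_h :: "real \<Rightarrow> real \<Rightarrow> real" where
  "prob_h \<pi> q = \<pi> * q + (1 - \<pi>) * (1 - q)"

definition prob_l :: "real \<Rightarrow> real \<Rightarrow> real" where
  "prob_l \<pi> q = \<pi> * (1 - q) + (1 - \<pi>) * q"

definition post_val_h :: "real \<Rightarrow> real \<Rightarrow> real \<Rightarrow> real \<Rightarrow> real" where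
  "post_val_h vH vL \<pi> q =
     (\<pi> * q / prob_h \<pi> q) * vH + ((1 - \<pi>) * (1 - q) / prob_h \<pi> q) * vL"

definition post_val_l :: "real \<Rightarrow> real \<Rightarrow> real \<Rightarrow> real \<Rightarrow> real" where
  "post_val_l vH vL \<pi> q =
     (\<pi> * (1 - q) / prob_l \<pi> q) * vH + ((1 - \<pi>) * q / prob_l \<pi> q) * vL"

definition prior_val :: "real \<Rightarrow> real \<Rightarrow> real \<Rightarrow> real" where
  "prior_val vH vL \<pi> = \<pi> * vH + (1 - \<pi>) * vL"

text \<open>Value U_pi(q) of a signal of quality q: expected utility with the signal
  (bidding the posterior expected value) minus expected utility without it
  (bidding the prior expected value).\<close>

definition signal_value ::
  "(real \<Rightarrow> real) \<Rightarrow> real \<Rightarrow> real \<Rightarrow> real \<Rightarrow> real \<Rightarrow> real" where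
  "signal_value f vH vL \<pi> q =
     prob_h \<pi> q * payoff f (post_val_h vH vL \<pi> q) (post_val_h vH vL \<pi> q)
   + prob_l \<pi> q * payoff f (post_val_l vH vL \<pi> q) (post_val_l vH vL \<pi> q)
   - payoff f (prior_val vH vL \<pi>) (prior_val vH vL \<pi>)"

end

theory Submission
  imports Defs
begin

text \<open>
  Let G(v) = payoff f v v be the expected utility of an advertiser bidding her
  expected value v.  G is convex with derivative the winning probability, which is
  M-Lipschitz on [vL, vH] when the density of the competing bid is bounded by M
  there; hence G lies below each tangent plus M/2 (x - y)^2.

  A signal of quality q2 \<ge> 1/2 is a garbling of one of quality q1 > q2 (flip the
  realisation with a suitable probability e).  Averaging the quadratic upper bound
  over the garbling, the linear terms cancel by the martingale property of
  posterior means, so U(q1) - U(q2) is at most M/2 times the gain in the second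
  moment of the posterior mean.  That second moment has a closed form whose gain
  is bounded uniformly in the prior by (vH - vL)^2 ((2q1-1)^2 - (2q2-1)^2) / 4,
  and a polynomial comparison yields the bound of the theorem.
\<close>

text \<open>It is the derivative of the payoff G(v) = payoff f v v, and plays the role of the
  linear term in the quadratic upper bound for G.\<close>

definition win_prob :: "(real \<Rightarrow> real) \<Rightarrow> real \<Rightarrow> real" where
  "win_prob f b = integral\<^sup>L lborel (\<lambda>p. indicator {..<b} p * f p)"

lemma triangle_integral:
  fixes x y :: real
  shows "integral\<^sup>L lborel (\<lambda>p. indicator {min x y..max x y} p * \<bar>x - p\<bar>) = (x - y)^2 / 2"
proof (cases "y \<le> x")
  case True
  have "(\<lambda>p. indicator {min x y..max x y} p * \<bar>x - p\<bar>) = (\<lambda>p. indicator {y..x} p *\<^sub>R (x - p))"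
    using True by (auto simp: indicator_def fun_eq_iff)
  moreover have "integral\<^sup>L lborel (\<lambda>p. indicator {y..x} p *\<^sub>R (x - p)) = (x*x - x^2/2) - (x*y - y^2/2)"
    by (rule integral_FTC_atLeastAtMost[where F="\<lambda>p. x*p - p^2/2"])
       (auto intro!: derivative_eq_intros continuous_intros True
         simp: has_real_derivative_iff_has_vector_derivative[symmetric])
  ultimately show ?thesis by (simp add: power2_eq_square algebra_simps)
next
  case False
  have "(\<lambda>p. indicator {min x y..max x y} p * \<bar>x - p\<bar>) = (\<lambda>p. indicator {x..y} p *\<^sub>R (p - x))"
    using False by (auto simp: indicator_def fun_eq_iff)
  moreover have "integral\<^sup>L lborel (\<lambda>p. indicator {x..y} p *\<^sub>R (p - x)) = (y^2/2 - x*y) - (x^2/2 - x*x)"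
    by (rule integral_FTC_atLeastAtMost[where F="\<lambda>p. p^2/2 - x*p"])
       (use False in \<open>auto intro!: derivative_eq_intros continuous_intros
         simp: has_real_derivative_iff_has_vector_derivative[symmetric]\<close>)
  ultimately show ?thesis by (simp add: power2_eq_square algebra_simps)
qed

text \<open>Integrability of the integrand defining the payoff; the support assumption keeps
  the factor (v - p) bounded.\<close>

lemma integrable_payoff_integrand:
  fixes f :: "real \<Rightarrow> real"
  assumes [measurable]: "f \<in> borel_measurable lborel"
    and supp: "\<And>p. p < 0 \<Longrightarrow> f p = 0" and f_int: "integrable lborel f"
  shows "integrable lborel (\<lambda>p. indicator {..<v} p * ((v - p) * f p))"
proof (rule Bochner_Integration.integrable_bound[where f="\<lambda>p. \<bar>v\<bar> * \<bar>f p\<bar>"])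
  show "integrable lborel (\<lambda>p. \<bar>v\<bar> * \<bar>f p\<bar>)" using f_int by simp
  show "AE p in lborel. norm (indicator {..<v} p * ((v - p) * f p)) \<le> norm (\<bar>v\<bar> * \<bar>f p\<bar>)"
  proof (rule AE_I2)
    fix p
    show "norm (indicator {..<v} p * ((v - p) * f p)) \<le> norm (\<bar>v\<bar> * \<bar>f p\<bar>)"
      using supp[of p] by (cases "p < 0") (auto simp: indicator_def abs_mult intro!: mult_right_mono)
  qed
qed simp

lemma integrable_win_integrand:
  fixes f :: "real \<Rightarrow> real"
  assumes [measurable]: "f \<in> borel_measurable lborel" and f_int: "integrable lborel f"
  shows "integrable lborel (\<lambda>p. indicator {..<b} p * f p)"
  by (rule Bochner_Integration.integrable_bound[where f=f]) (auto simp: indicator_def f_int)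

text \<open>Pointwise bound behind the curvature estimate: the two indicators differ exactly
  for bids between x and y, where the integrand is |x - p| f p \<le> M |x - p|.\<close>

lemma payoff_gap_pointwise:
  fixes f :: "real \<Rightarrow> real"
  assumes nonneg: "f p \<ge> 0" and M: "0 \<le> M"
    and bd: "min x y \<le> p \<Longrightarrow> p \<le> max x y \<Longrightarrow> f p \<le> M"
  shows "(indicator {..<x} p - indicator {..<y} p) * (x - p) * f p
           \<le> M * (indicator {min x y..max x y} p * \<bar>x - p\<bar>)"
proof (cases "min x y \<le> p \<and> p < max x y")
  case True
  have "(indicator {..<x} p - indicator {..<y} p) * (x - p) = (\<bar>x - p\<bar> :: real)"
    using True by (auto simp: indicator_def)
  moreover have "\<bar>x - p\<bar> * f p \<le> \<bar>x - p\<bar> * M"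
    using True bd by (intro mult_left_mono) auto
  ultimately show ?thesis using True by (simp add: indicator_def mult.commute)
next
  case False
  hence "(indicator {..<x} p - indicator {..<y} p) * (x - p) = (0 :: real)"
    by (auto simp: indicator_def)
  moreover have "0 \<le> M * (indicator {min x y..max x y} p * \<bar>x - p\<bar>)"
    using M by simp
  ultimately show ?thesis by (metis mult_zero_left)
qed

text \<open>G(v) = payoff f v v is convex with derivative win_prob f v, and win_prob is
  M-Lipschitz where the density is bounded by M.  Hence G lies below its tangent
  at y plus the quadratic M/2 (x - y)^2.\<close>

lemma payoff_quadratic_upper_bound:
  fixes f :: "real \<Rightarrow> real"
  assumes [measurable]: "f \<in> borel_measurable lborel"
    and nonneg: "\<And>p. f p \<ge> 0" and supp: "\<And>p. p < 0 \<Longrightarrow> f p = 0"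
    and f_int: "integrable lborel f"
    and bd: "\<And>p. min x y \<le> p \<Longrightarrow> p \<le> max x y \<Longrightarrow> f p \<le> M"
  shows "payoff f x x \<le> payoff f y y + win_prob f y * (x - y) + M / 2 * (x - y)^2"
proof -
  define gap where "gap p = (indicator {..<x} p - indicator {..<y} p) * (x - p) * f p" for p
  have gap_eq: "gap = (\<lambda>p. indicator {..<x} p * ((x - p) * f p) - indicator {..<y} p * ((y - p) * f p)
                        - (x - y) * (indicator {..<y} p * f p))"
    unfolding gap_def by (simp add: fun_eq_iff algebra_simps)
  note integrable = integrable_payoff_integrand[OF assms(1,3,4)] integrable_win_integrand[OF assms(1,4)]
  have M: "0 \<le> M" using bd[of x] nonneg[of x] by simp
  have "payoff f x x - payoff f y y - win_prob f y * (x - y) = integral\<^sup>L lborel gap"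
    unfolding gap_eq payoff_def win_prob_def set_lebesgue_integral_def using integrable
    by (simp add: integral_diff)
  also have "\<dots> \<le> integral\<^sup>L lborel (\<lambda>p. M * (indicator {min x y..max x y} p * \<bar>x - p\<bar>))"
  proof (rule integral_mono)
    show "integrable lborel gap" unfolding gap_eq using integrable by simp
    show "integrable lborel (\<lambda>p. M * (indicator {min x y..max x y} p * \<bar>x - p\<bar>))"
      using borel_integrable_atLeastAtMost[of "min x y" "max x y" "\<lambda>p. \<bar>x - p\<bar>"]
      by (simp add: mult.commute)
  qed (unfold gap_def, use payoff_gap_pointwise nonneg M bd in blast)
  also have "\<dots> = M / 2 * (x - y)^2" by (simp add: triangle_integral)
  finally show ?thesis by simp
qed

text \<open>Let a two-outcome experiment with probabilities
  P1, P2 and posterior means x1, x2 be garbled through the joint weights w into one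
  with probabilities R1, R2 and posterior means y1, y2 (martingale conditions
  means).  Then for every G below its tangents plus K (x - y)^2, the gain in
  expected G is at most K times the gain in the second moment of posterior means:
  the linear terms cancel by the martingale property.\<close>

lemma garbling_quadratic_bound:
  fixes G D :: "real \<Rightarrow> real"
  assumes quad: "\<And>x y. x \<in> S \<Longrightarrow> y \<in> S \<Longrightarrow> G x \<le> G y + D y * (x - y) + K * (x - y)^2"
    and S: "x1 \<in> S" "x2 \<in> S" "y1 \<in> S" "y2 \<in> S"
    and w: "w11 \<ge> 0" "w12 \<ge> 0" "w21 \<ge> 0" "w22 \<ge> 0"
    and rows: "w11 + w12 = P1" "w21 + w22 = P2"
    and cols: "w11 + w21 = R1" "w12 + w22 = R2"
    and means: "w11 * x1 + w21 * x2 = R1 * y1" "w12 * x1 + w22 * x2 = R2 * y2"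
  shows "P1 * G x1 + P2 * G x2 - R1 * G y1 - R2 * G y2
           \<le> K * (P1 * x1^2 + P2 * x2^2 - R1 * y1^2 - R2 * y2^2)"
proof -
  have "P1 * G x1 + P2 * G x2 = w11 * G x1 + w12 * G x1 + w21 * G x2 + w22 * G x2"
    unfolding rows[symmetric] by (simp add: algebra_simps)
  also have "\<dots> \<le> w11 * (G y1 + D y1 * (x1 - y1) + K * (x1 - y1)^2)
                  + w12 * (G y2 + D y2 * (x1 - y2) + K * (x1 - y2)^2)
                  + w21 * (G y1 + D y1 * (x2 - y1) + K * (x2 - y1)^2)
                  + w22 * (G y2 + D y2 * (x2 - y2) + K * (x2 - y2)^2)"
    using S w by (intro add_mono mult_left_mono quad) auto
  also have "\<dots> = (w11 + w21) * G y1 + (w12 + w22) * G y2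
                  + D y1 * (w11 * x1 + w21 * x2 - (w11 + w21) * y1)
                  + D y2 * (w12 * x1 + w22 * x2 - (w12 + w22) * y2)
                  + K * ((w11 + w12) * x1^2 + (w21 + w22) * x2^2
                         - 2 * y1 * (w11 * x1 + w21 * x2) - 2 * y2 * (w12 * x1 + w22 * x2)
                         + (w11 + w21) * y1^2 + (w12 + w22) * y2^2)"
    by (simp add: algebra_simps power2_eq_square)
  also have "\<dots> = R1 * G y1 + R2 * G y2 + K * (P1 * x1^2 + P2 * x2^2 - R1 * y1^2 - R2 * y2^2)"
    unfolding rows cols means by (simp add: algebra_simps power2_eq_square)
  finally show ?thesis by simp
qed

definition posterior_second_moment :: "real \<Rightarrow> real \<Rightarrow> real \<Rightarrow> real \<Rightarrow> real" where
  "posterior_second_moment vH vL \<pi> q =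
     prob_h \<pi> q * (post_val_h vH vL \<pi> q)^2 + prob_l \<pi> q * (post_val_l vH vL \<pi> q)^2"

lemma signal_probs_pos:
  assumes "0 < \<pi>" "\<pi> < 1" "0 \<le> q" "q \<le> 1"
  shows "0 < prob_h \<pi> q" "0 < prob_l \<pi> q"
proof -
  define m where "m = min \<pi> (1 - \<pi>)"
  have "0 < m" using assms by (simp add: m_def)
  moreover have "m * q \<le> \<pi> * q" "m * (1 - q) \<le> (1 - \<pi>) * (1 - q)"
                "m * (1 - q) \<le> \<pi> * (1 - q)" "m * q \<le> (1 - \<pi>) * q"
    using assms by (auto simp: m_def intro!: mult_right_mono)
  ultimately show "0 < prob_h \<pi> q" "0 < prob_l \<pi> q"
    unfolding prob_h_def prob_l_def by (simp_all add: algebra_simps)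
qed

lemma prob_times_post_val:
  assumes "0 < \<pi>" "\<pi> < 1" "0 \<le> q" "q \<le> 1"
  shows "prob_h \<pi> q * post_val_h vH vL \<pi> q = \<pi> * q * vH + (1 - \<pi>) * (1 - q) * vL"
    and "prob_l \<pi> q * post_val_l vH vL \<pi> q = \<pi> * (1 - q) * vH + (1 - \<pi>) * q * vL"
  using signal_probs_pos[OF assms] unfolding post_val_h_def post_val_l_def
  by (simp_all add: field_simps)

lemma post_val_mem:
  assumes "0 < \<pi>" "\<pi> < 1" "0 \<le> q" "q \<le> 1" "vL \<le> vH"
  shows "post_val_h vH vL \<pi> q \<in> {vL..vH}" "post_val_l vH vL \<pi> q \<in> {vL..vH}"
proof -
  note pos = signal_probs_pos[OF assms(1-4)]
  note prod = prob_times_post_val[OF assms(1-4), of vH vL]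
  have "\<pi> * q * vL \<le> \<pi> * q * vH" "(1 - \<pi>) * (1 - q) * vL \<le> (1 - \<pi>) * (1 - q) * vH"
       "\<pi> * (1 - q) * vL \<le> \<pi> * (1 - q) * vH" "(1 - \<pi>) * q * vL \<le> (1 - \<pi>) * q * vH"
    using assms by (simp_all add: mult_left_mono)
  moreover have scale: "prob_h \<pi> q * v = \<pi> * q * v + (1 - \<pi>) * (1 - q) * v"
                       "prob_l \<pi> q * v = \<pi> * (1 - q) * v + (1 - \<pi>) * q * v" for v
    by (simp_all add: prob_h_def prob_l_def distrib_right)
  ultimately have "prob_h \<pi> q * vL \<le> prob_h \<pi> q * post_val_h vH vL \<pi> q"
        "prob_h \<pi> q * post_val_h vH vL \<pi> q \<le> prob_h \<pi> q * vH"
        "prob_l \<pi> q * vL \<le> prob_l \<pi> q * post_val_l vH vL \<pi> q"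
        "prob_l \<pi> q * post_val_l vH vL \<pi> q \<le> prob_l \<pi> q * vH"
    unfolding prod scale[of vL] scale[of vH] by linarith+
  thus "post_val_h vH vL \<pi> q \<in> {vL..vH}" "post_val_l vH vL \<pi> q \<in> {vL..vH}"
    using pos by simp_all
qed

text \<open>A signal of quality q2 = (1 - e) q1 + e (1 - q1) is obtained from one of quality q1
  by flipping the realisation with probability e.\<close>

lemma garbled_signal:
  assumes "0 < \<pi>" "\<pi> < 1" "0 \<le> q1" "q1 \<le> 1" "0 \<le> e" "e \<le> 1"
    and q2: "q2 = (1 - e) * q1 + e * (1 - q1)"
  shows "prob_h \<pi> q2 = (1 - e) * prob_h \<pi> q1 + e * prob_l \<pi> q1"
    and "prob_l \<pi> q2 = e * prob_h \<pi> q1 + (1 - e) * prob_l \<pi> q1"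
    and "prob_h \<pi> q2 * post_val_h vH vL \<pi> q2
           = (1 - e) * (prob_h \<pi> q1 * post_val_h vH vL \<pi> q1) + e * (prob_l \<pi> q1 * post_val_l vH vL \<pi> q1)"
    and "prob_l \<pi> q2 * post_val_l vH vL \<pi> q2
           = e * (prob_h \<pi> q1 * post_val_h vH vL \<pi> q1) + (1 - e) * (prob_l \<pi> q1 * post_val_l vH vL \<pi> q1)"
proof -
  have "0 \<le> q2" "q2 \<le> 1"
    using assms convex_bound_le[of q1 1 "1 - q1" "1 - e" e] by (auto intro!: add_nonneg_nonneg)
  note post1 = prob_times_post_val[OF assms(1-4), of vH vL]
    and post2 = prob_times_post_val[OF assms(1,2) \<open>0 \<le> q2\<close> \<open>q2 \<le> 1\<close>, of vH vL]
  show "prob_h \<pi> q2 = (1 - e) * prob_h \<pi> q1 + e * prob_l \<pi> q1"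
       "prob_l \<pi> q2 = e * prob_h \<pi> q1 + (1 - e) * prob_l \<pi> q1"
    unfolding prob_h_def prob_l_def q2 by (simp_all add: algebra_simps)
  show "prob_h \<pi> q2 * post_val_h vH vL \<pi> q2
           = (1 - e) * (prob_h \<pi> q1 * post_val_h vH vL \<pi> q1) + e * (prob_l \<pi> q1 * post_val_l vH vL \<pi> q1)"
       "prob_l \<pi> q2 * post_val_l vH vL \<pi> q2
           = e * (prob_h \<pi> q1 * post_val_h vH vL \<pi> q1) + (1 - e) * (prob_l \<pi> q1 * post_val_l vH vL \<pi> q1)"
    unfolding post1 post2 by (simp_all add: q2 algebra_simps)
qed

lemma quality_garbling:
  fixes q1 q2 :: real
  assumes "1/2 \<le> q2" "q2 < q1"
  shows "\<exists>e. 0 \<le> e \<and> e \<le> 1 \<and> q2 = (1 - e) * q1 + e * (1 - q1)"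
proof (intro exI conjI)
  let ?e = "(q1 - q2) / (2 * q1 - 1)"
  have pos: "0 < 2 * q1 - 1" using assms by simp
  have affine: "(1 - e) * q1 + e * (1 - q1) = q1 - e * (2 * q1 - 1)" for e :: real
    by (simp add: algebra_simps)
  have "(1 - ?e) * q1 + ?e * (1 - q1) = q1 - ?e * (2 * q1 - 1)" by (rule affine)
  also have "\<dots> = q2" using pos by simp
  finally show "q2 = (1 - ?e) * q1 + ?e * (1 - q1)" by simp
  show "0 \<le> ?e" "?e \<le> 1" using assms pos by simp_all
qed

lemma signal_value_gain_le_second_moment_gain:
  fixes f :: "real \<Rightarrow> real"
  assumes f_meas: "f \<in> borel_measurable lborel"
    and f_nonneg: "\<And>p. f p \<ge> 0" and f_supp: "\<And>p. p < 0 \<Longrightarrow> f p = 0"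
    and f_int: "integrable lborel f"
    and bd: "\<And>p. p \<in> {vL..vH} \<Longrightarrow> f p \<le> M"
    and vals: "vL \<le> vH" and prior: "0 < \<pi>" "\<pi> < 1"
    and quals: "1/2 \<le> q2" "q2 < q1" "q1 \<le> 1"
  shows "signal_value f vH vL \<pi> q1 - signal_value f vH vL \<pi> q2
           \<le> M / 2 * (posterior_second_moment vH vL \<pi> q1 - posterior_second_moment vH vL \<pi> q2)"
proof -
  have quad: "payoff f x x \<le> payoff f y y + win_prob f y * (x - y) + M / 2 * (x - y)^2"
    if "x \<in> {vL..vH}" "y \<in> {vL..vH}" for x y
    by (rule payoff_quadratic_upper_bound[OF f_meas f_nonneg f_supp f_int bd]) (use that in auto)
  obtain e where e: "0 \<le> e" "e \<le> 1" and q2: "q2 = (1 - e) * q1 + e * (1 - q1)"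
    using quality_garbling[OF quals(1,2)] by blast
  have q_range: "0 \<le> q1" "0 \<le> q2" "q2 \<le> 1" using quals by simp_all
  note garbled = garbled_signal[OF prior q_range(1) quals(3) e q2]
  let ?x1 = "post_val_h vH vL \<pi> q1" and ?x2 = "post_val_l vH vL \<pi> q1"
    and ?y1 = "post_val_h vH vL \<pi> q2" and ?y2 = "post_val_l vH vL \<pi> q2"
  have mem: "?x1 \<in> {vL..vH}" "?x2 \<in> {vL..vH}" "?y1 \<in> {vL..vH}" "?y2 \<in> {vL..vH}"
    using post_val_mem[OF prior _ _ vals] q_range quals by simp_all
  have weights: "0 \<le> prob_h \<pi> q1 * (1 - e)" "0 \<le> prob_h \<pi> q1 * e"
                "0 \<le> prob_l \<pi> q1 * e" "0 \<le> prob_l \<pi> q1 * (1 - e)"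
    using signal_probs_pos[OF prior q_range(1) quals(3)] e by simp_all
  have rows: "prob_h \<pi> q1 * (1 - e) + prob_h \<pi> q1 * e = prob_h \<pi> q1"
             "prob_l \<pi> q1 * e + prob_l \<pi> q1 * (1 - e) = prob_l \<pi> q1"
    by (simp_all add: algebra_simps)
  have cols: "prob_h \<pi> q1 * (1 - e) + prob_l \<pi> q1 * e = prob_h \<pi> q2"
             "prob_h \<pi> q1 * e + prob_l \<pi> q1 * (1 - e) = prob_l \<pi> q2"
    using garbled(1,2) by (simp_all add: algebra_simps)
  have means: "prob_h \<pi> q1 * (1 - e) * ?x1 + prob_l \<pi> q1 * e * ?x2 = prob_h \<pi> q2 * ?y1"
              "prob_h \<pi> q1 * e * ?x1 + prob_l \<pi> q1 * (1 - e) * ?x2 = prob_l \<pi> q2 * ?y2"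
    using garbled(3,4)[of vH vL] by (simp_all add: algebra_simps)
  have "prob_h \<pi> q1 * payoff f ?x1 ?x1 + prob_l \<pi> q1 * payoff f ?x2 ?x2
          - prob_h \<pi> q2 * payoff f ?y1 ?y1 - prob_l \<pi> q2 * payoff f ?y2 ?y2
        \<le> M / 2 * (prob_h \<pi> q1 * ?x1^2 + prob_l \<pi> q1 * ?x2^2
                     - prob_h \<pi> q2 * ?y1^2 - prob_l \<pi> q2 * ?y2^2)"
    by (rule garbling_quadratic_bound[where G = "\<lambda>v. payoff f v v", OF quad mem weights rows cols means])
  thus ?thesis unfolding signal_value_def posterior_second_moment_def by (simp add: diff_diff_eq)
qed

lemma prob_product:
  "prob_h \<pi> q * prob_l \<pi> q = \<pi> * (1 - \<pi>) + (2 * \<pi> - 1)^2 / 4 * (1 - (2 * q - 1)^2)"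
  unfolding prob_h_def prob_l_def by (simp add: field_simps power2_eq_square)

text \<open>Closed form of the posterior second moment: the squared prior mean plus the
  variance of the posterior mean.\<close>

lemma posterior_second_moment_closed_form:
  assumes "0 < \<pi>" "\<pi> < 1" "0 \<le> q" "q \<le> 1"
  shows "posterior_second_moment vH vL \<pi> q
           = (prior_val vH vL \<pi>)^2
             + (vH - vL)^2 * (\<pi>^2 * (1 - \<pi>)^2 * (2 * q - 1)^2 / (prob_h \<pi> q * prob_l \<pi> q))"
proof -
  define ph pl where "ph = prob_h \<pi> q" and "pl = prob_l \<pi> q"
  define A B where "A = \<pi> * q * vH + (1 - \<pi>) * (1 - q) * vL"
    and "B = \<pi> * (1 - q) * vH + (1 - \<pi>) * q * vL"
  have pos: "0 < ph" "0 < pl" unfolding ph_def pl_def using signal_probs_pos[OF assms] by simp_all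
  have "post_val_h vH vL \<pi> q = A / ph" "post_val_l vH vL \<pi> q = B / pl"
    using prob_times_post_val[OF assms, of vH vL] pos
    unfolding A_def B_def ph_def pl_def by (simp_all add: field_simps)
  hence "posterior_second_moment vH vL \<pi> q = ph * (A / ph)^2 + pl * (B / pl)^2"
    unfolding posterior_second_moment_def ph_def pl_def by simp
  also have "\<dots> = (A^2 * pl + B^2 * ph) / (ph * pl)"
    using pos by (simp add: field_simps power2_eq_square)
  also have "A^2 * pl + B^2 * ph
      = (prior_val vH vL \<pi>)^2 * (ph * pl) + (vH - vL)^2 * \<pi>^2 * (1 - \<pi>)^2 * (2 * q - 1)^2"
    unfolding A_def B_def ph_def pl_def prob_h_def prob_l_def prior_val_def by algebra
  finally show ?thesis using pos by (simp add: field_simps ph_def pl_def)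
qed

lemma precision_gain_bound:
  fixes a d1 d2 :: real
  assumes a: "0 < a" "a < 1" and d: "0 \<le> d2" "d2 \<le> d1" "d1 \<le> 1"
  defines "P d \<equiv> a * (1 - a) + (2 * a - 1)^2 / 4 * (1 - d^2)"
  shows "a^2 * (1 - a)^2 * (d1^2 / P d1 - d2^2 / P d2) \<le> (d1^2 - d2^2) / 4"
proof -
  have var_pos: "0 < a * (1 - a)" using a by simp
  have P_ge: "a * (1 - a) \<le> P d" if "0 \<le> d" "d \<le> 1" for d
    using that unfolding P_def by (simp add: power_le_one)
  have P_pos: "0 < P d1" "0 < P d2" using P_ge var_pos d by (meson order.trans less_le_trans)+
  have gain_nonneg: "0 \<le> d1^2 - d2^2" using d by (simp add: power_mono)
  have "d1^2 / P d1 - d2^2 / P d2 = (d1^2 * P d2 - d2^2 * P d1) / (P d1 * P d2)"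
    using P_pos by (simp add: field_simps)
  also have "d1^2 * P d2 - d2^2 * P d1 = (d1^2 - d2^2) / 4"
    unfolding P_def by (simp add: field_simps power2_eq_square)
  finally have ratio: "d1^2 / P d1 - d2^2 / P d2 = (d1^2 - d2^2) / 4 / (P d1 * P d2)" .
  have "a^2 * (1 - a)^2 = (a * (1 - a)) * (a * (1 - a))" by (simp add: power2_eq_square)
  also have "\<dots> \<le> P d1 * P d2" using P_ge P_pos d var_pos by (intro mult_mono) auto
  finally have "a^2 * (1 - a)^2 / (P d1 * P d2) \<le> 1" using P_pos by simp
  hence "a^2 * (1 - a)^2 / (P d1 * P d2) * ((d1^2 - d2^2) / 4) \<le> 1 * ((d1^2 - d2^2) / 4)"
    using gain_nonneg by (intro mult_right_mono) auto
  thus ?thesis unfolding ratio by simp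
qed

lemma second_moment_gain_bound:
  assumes "0 < \<pi>" "\<pi> < 1" "1/2 \<le> q2" "q2 \<le> q1" "q1 \<le> 1"
  shows "posterior_second_moment vH vL \<pi> q1 - posterior_second_moment vH vL \<pi> q2
           \<le> (vH - vL)^2 * (((2 * q1 - 1)^2 - (2 * q2 - 1)^2) / 4)"
proof -
  have "\<pi>^2 * (1 - \<pi>)^2 * ((2 * q1 - 1)^2 / (prob_h \<pi> q1 * prob_l \<pi> q1)
                            - (2 * q2 - 1)^2 / (prob_h \<pi> q2 * prob_l \<pi> q2))
        \<le> ((2 * q1 - 1)^2 - (2 * q2 - 1)^2) / 4"
    unfolding prob_product using assms by (intro precision_gain_bound) auto
  hence "(vH - vL)^2 * (\<pi>^2 * (1 - \<pi>)^2 * ((2 * q1 - 1)^2 / (prob_h \<pi> q1 * prob_l \<pi> q1)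
                            - (2 * q2 - 1)^2 / (prob_h \<pi> q2 * prob_l \<pi> q2)))
        \<le> (vH - vL)^2 * (((2 * q1 - 1)^2 - (2 * q2 - 1)^2) / 4)"
    by (rule mult_left_mono) simp
  thus ?thesis using assms
    by (simp add: posterior_second_moment_closed_form right_diff_distrib diff_divide_distrib)
qed

text \<open>Comparison with the polynomial of the theorem; the difference is a nonnegative
  multiple of (2 q1 - 1)^3 - (2 q2 - 1)^3.\<close>

lemma quality_polynomial_bound:
  fixes q1 q2 :: real
  assumes "1/2 \<le> q2" "q2 \<le> q1"
  shows "((2 * q1 - 1)^2 - (2 * q2 - 1)^2) / 8 \<le> 2/3 * (q1^3 - q2^3) - 1/2 * (q1^2 - q2^2)"
proof -
  have "(2 * q2 - 1)^3 \<le> (2 * q1 - 1)^3" using assms by (intro power_mono) auto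
  moreover have "2/3 * (q1^3 - q2^3) - 1/2 * (q1^2 - q2^2)
      = ((2 * q1 - 1)^3 - (2 * q2 - 1)^3) / 12 + ((2 * q1 - 1)^2 - (2 * q2 - 1)^2) / 8"
    by (simp add: field_simps power2_eq_square power3_eq_cube)
  ultimately show ?thesis by simp
qed

theorem mainTheorem16:
  fixes f :: "real \<Rightarrow> real" and vH vL \<pi> q1 q2 c1 c2 :: real
  assumes f_meas: "f \<in> borel_measurable lborel"
    and f_nonneg: "\<And>p. f p \<ge> 0"
    and f_supp: "\<And>p. p < 0 \<Longrightarrow> f p = 0"
    and f_int: "integrable lborel f"
    and f_total: "integral\<^sup>L lborel f = 1"
    and f_bdd: "bdd_above (f ` {vL..vH})"
    and vals: "0 \<le> vL" "vL < vH"
    and prior: "0 < \<pi>" "\<pi> < 1"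
    and quals: "1/2 \<le> q2" "q2 < q1" "q1 \<le> 1"
  shows "signal_value f vH vL \<pi> q1 - signal_value f vH vL \<pi> q2
           \<le> Sup (f ` {vL..vH}) * (vH - vL)^2
               * (2/3 * (q1^3 - q2^3) - 1/2 * (q1^2 - q2^2))
       \<and> (c1 - c2 > Sup (f ` {vL..vH}) * (vH - vL)^2
               * (2/3 * (q1^3 - q2^3) - 1/2 * (q1^2 - q2^2))
          \<longrightarrow> signal_value f vH vL \<pi> q2 - c2 > signal_value f vH vL \<pi> q1 - c1)"
proof -
  define M where "M = Sup (f ` {vL..vH})"
  have bd: "\<And>p. p \<in> {vL..vH} \<Longrightarrow> f p \<le> M"
    unfolding M_def using f_bdd by (intro cSup_upper) auto
  have M_nonneg: "0 \<le> M" using bd[of vL] f_nonneg[of vL] vals by auto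
  have "signal_value f vH vL \<pi> q1 - signal_value f vH vL \<pi> q2
        \<le> M / 2 * (posterior_second_moment vH vL \<pi> q1 - posterior_second_moment vH vL \<pi> q2)"
    using signal_value_gain_le_second_moment_gain[OF f_meas f_nonneg f_supp f_int bd] vals prior quals
    by simp
  also have "\<dots> \<le> M / 2 * ((vH - vL)^2 * (((2 * q1 - 1)^2 - (2 * q2 - 1)^2) / 4))"
    using second_moment_gain_bound[OF prior quals(1) _ quals(3)] quals M_nonneg
    by (intro mult_left_mono) auto
  also have "\<dots> = M * (vH - vL)^2 * (((2 * q1 - 1)^2 - (2 * q2 - 1)^2) / 8)" by simp
  also have "\<dots> \<le> M * (vH - vL)^2 * (2/3 * (q1^3 - q2^3) - 1/2 * (q1^2 - q2^2))"
    using quality_polynomial_bound[OF quals(1)] quals M_nonneg by (intro mult_left_mono) auto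
  finally show ?thesis unfolding M_def by auto
qed

end
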